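(* For every $k\ge1$ there is $c>0$ such that the following holds. For every $n\ge k$ and every pair $w,u$ of functions from $[n]^{(k)}$ to $\mathbb{R}$, $$\operatorname{disc}^+(w,u)\operatorname{disc}^-(w,u)\ge c^2 \gamma(w,u)^2 n^2.$$
   Context: $[n]=\{1,\dots,n\}$; $V^{(k)}$ is the family of $k$-subsets of $V$; $\langle w,u\rangle=\sum_{e\in V^{(k)}}w(e)u(e)$; $d(w)=w(V)/\binom{|V|}k$ where $w(V)=\sum_e w(e)$; for a permutation $\pi$ of $V$, $w_\pi(e)=w(\pi^{-1}(e))$. With $n=|V|$: $\operatorname{disc}^+(w,u)=\max_\pi\langle w_\pi,u\rangle-d(w)d(u)\binom nk$ and $\operatorname{disc}^-(w,u)=d(w)d(u)\binom nk-\min_\pi\langle w_\pi,u\rangle$. Fix distinct $x,y\in V$ and let $\tau=(xy)$ be the transposition; then $\gamma(w,u)=\mathbb{E}_{\pi,\sigma}|\langle w_\pi,u_\sigma\rangle-\langle w_{\tau\pi},u_\sigma\rangle|$ where $\pi,\sigma$ are independent uniformly random permutations of $V$ (this does not depend on the choice of $x,y$). *)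

theory Defs
  imports "HOL-Analysis.Analysis" "HOL-Combinatorics.Transposition"
begin

definition ksubsets :: "'a set \<Rightarrow> nat \<Rightarrow> 'a set set" where
  "ksubsets V k = {e. e \<subseteq> V \<and> card e = k}"

definition ip :: "'a set \<Rightarrow> nat \<Rightarrow> ('a set \<Rightarrow> real) \<Rightarrow> ('a set \<Rightarrow> real) \<Rightarrow> real" where
  "ip V k w u = (\<Sum>e\<in>ksubsets V k. w e * u e)"

definition dens :: "'a set \<Rightarrow> nat \<Rightarrow> ('a set \<Rightarrow> real) \<Rightarrow> real" where
  "dens V k w = (\<Sum>e\<in>ksubsets V k. w e) / real (card V choose k)"

definition permw :: "('a \<Rightarrow> 'a) \<Rightarrow> ('a set \<Rightarrow> real) \<Rightarrow> 'a set \<Rightarrow> real" where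
  "permw \<pi> w e = w (inv \<pi> ` e)"

definition perms :: "'a set \<Rightarrow> ('a \<Rightarrow> 'a) set" where
  "perms V = {\<pi>. \<pi> permutes V}"

definition disc_plus :: "'a set \<Rightarrow> nat \<Rightarrow> ('a set \<Rightarrow> real) \<Rightarrow> ('a set \<Rightarrow> real) \<Rightarrow> real" where
  "disc_plus V k w u =
     Max ((\<lambda>\<pi>. ip V k (permw \<pi> w) u) ` perms V)
     - dens V k w * dens V k u * real (card V choose k)"

definition disc_minus :: "'a set \<Rightarrow> nat \<Rightarrow> ('a set \<Rightarrow> real) \<Rightarrow> ('a set \<Rightarrow> real) \<Rightarrow> real" where
  "disc_minus V k w u =
     dens V k w * dens V k u * real (card V choose k)
     - Min ((\<lambda>\<pi>. ip V k (permw \<pi> w) u) ` perms V)"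

definition gamma_xy :: "'a set \<Rightarrow> nat \<Rightarrow> 'a \<Rightarrow> 'a \<Rightarrow> ('a set \<Rightarrow> real) \<Rightarrow> ('a set \<Rightarrow> real) \<Rightarrow> real" where
  "gamma_xy V k x y w u =
     (\<Sum>\<pi>\<in>perms V. \<Sum>\<sigma>\<in>perms V.
        \<bar>ip V k (permw \<pi> w) (permw \<sigma> u)
         - ip V k (permw (Transposition.transpose x y \<circ> \<pi>) w) (permw \<sigma> u)\<bar>)
     / (real (card (perms V)))^2"

text \<open>For V = [n] we fix x = 1, y = 2 (gamma does not depend on the choice).
  If n < 2 there is no transposition; we then set gamma = 0.\<close>
definition gamma_n :: "nat \<Rightarrow> nat \<Rightarrow> (nat set \<Rightarrow> real) \<Rightarrow> (nat set \<Rightarrow> real) \<Rightarrow> real" where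
  "gamma_n n k w u = (if n \<ge> 2 then gamma_xy {1..n} k 1 2 w u else 0)"

end

theory Submission
  imports Defs "HOL-Computational_Algebra.Polynomial"
begin

(* Fix permutations pi, sigma and the m = n div 2 disjoint transpositions (2i-1 2i).
   For a set T of them, F(T) = <w_{tau_T pi}, u_sigma> always lies between min and max of
   <w_pi, u>, and it is a sum over edges e of terms that see T only through the at most k pairs
   met by e.  So the average of F over a random T, each pair chosen with probability x, is a
   polynomial of degree at most k in x, bounded on [0,1], whose linear coefficient is the total
   first-order gain sum_i (F{i} - F{}).  A Markov-type bound on the linear coefficient of such a
   polynomial bounds the positive part of this gain by O(sqrt(k (max - F{}) (max - min))).
   Averaging over pi and sigma, every pair contributes gamma/2, the mean of max - F{} is disc^+
   and max - min = disc^+ + disc^-; Cauchy-Schwarz gives (m gamma)^2 = O(disc^+ (disc^+ + disc^-)),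
   and replacing w by -w gives the same with disc^-, whence (m gamma)^2 = O(disc^+ disc^-). *)

section \<open>A Markov-type bound for polynomials on the unit interval\<close>

definition unit_node :: "nat \<Rightarrow> nat \<Rightarrow> real" where
  "unit_node k i = real i / real k"

definition lagrange_basis :: "nat \<Rightarrow> nat \<Rightarrow> real poly" where
  "lagrange_basis k i =
     (\<Prod>j\<in>{0..k}-{i}. smult (1 / (unit_node k i - unit_node k j)) [:- unit_node k j, 1:])"

lemma unit_node_eq_iff: "k \<ge> 1 \<Longrightarrow> unit_node k i = unit_node k j \<longleftrightarrow> i = j"
  by (auto simp: unit_node_def divide_simps)

lemma unit_node_in_unit_interval: "i \<le> k \<Longrightarrow> unit_node k i \<in> {0..1}"
  by (auto simp: unit_node_def divide_simps)

lemma poly_lagrange_basis_node: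
  assumes "k \<ge> 1" "i \<le> k" "j \<le> k"
  shows "poly (lagrange_basis k i) (unit_node k j) = (if i = j then 1 else 0)"
proof -
  have "poly (lagrange_basis k i) (unit_node k j) =
      (\<Prod>l\<in>{0..k}-{i}. (unit_node k j - unit_node k l) / (unit_node k i - unit_node k l))"
    unfolding lagrange_basis_def poly_prod by (intro prod.cong) (auto simp: diff_divide_distrib)
  also have "\<dots> = (if i = j then 1 else 0)"
    using assms by (auto simp: unit_node_eq_iff intro!: prod.neutral prod_zero)
  finally show ?thesis .
qed

lemma degree_lagrange_basis_le:
  assumes "i \<le> k" shows "degree (lagrange_basis k i) \<le> k"
proof -
  have "degree (lagrange_basis k i)
      \<le> sum (degree \<circ> (\<lambda>j. smult (1 / (unit_node k i - unit_node k j)) [:- unit_node k j, 1:]))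
          ({0..k}-{i})"
    unfolding lagrange_basis_def by (rule degree_prod_sum_le) auto
  also have "\<dots> \<le> (\<Sum>j\<in>{0..k}-{i}. 1)"
    by (intro sum_mono) (auto simp: degree_smult_le)
  finally show ?thesis using assms by simp
qed

lemma lagrange_interpolation:
  assumes "k \<ge> 1" "degree P \<le> k"
  shows "P = (\<Sum>i\<le>k. smult (poly P (unit_node k i)) (lagrange_basis k i))"
proof (rule poly_eqI_degree[of "unit_node k ` {..k}"])
  fix x assume "x \<in> unit_node k ` {..k}"
  then obtain j where "j \<le> k" "x = unit_node k j" by auto
  then show "poly P x = poly (\<Sum>i\<le>k. smult (poly P (unit_node k i)) (lagrange_basis k i)) x"
    using assms by (simp add: poly_sum poly_lagrange_basis_node if_distrib cong: if_cong)
next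
  have card_nodes: "card (unit_node k ` {..k}) = k + 1"
    using assms by (subst card_image) (auto intro: inj_onI simp: unit_node_eq_iff)
  then show "degree P < card (unit_node k ` {..k})" using assms by simp
  have "degree (\<Sum>i\<le>k. smult (poly P (unit_node k i)) (lagrange_basis k i)) \<le> k"
    by (intro degree_sum_le) (auto intro!: order.trans[OF degree_smult_le] degree_lagrange_basis_le)
  then show "degree (\<Sum>i\<le>k. smult (poly P (unit_node k i)) (lagrange_basis k i))
      < card (unit_node k ` {..k})"
    using card_nodes by simp
qed

definition coeff_bound_const :: "nat \<Rightarrow> real" where
  "coeff_bound_const k = 1 + (\<Sum>i\<le>k. \<Sum>l\<le>k. \<bar>coeff (lagrange_basis k i) l\<bar>)"

lemma coeff_bound_const_pos: "coeff_bound_const k > 0"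
  unfolding coeff_bound_const_def by (smt (verit) sum_nonneg abs_ge_zero)

lemma abs_coeff_le_of_abs_poly_le:
  assumes "k \<ge> 1" "degree P \<le> k" "\<And>x. x \<in> {0..1} \<Longrightarrow> \<bar>poly P x\<bar> \<le> M"
  shows "\<bar>coeff P l\<bar> \<le> coeff_bound_const k * M"
proof -
  have M: "M \<ge> 0" using assms(3)[of 0] by auto
  show ?thesis
  proof (cases "l \<le> k")
    case False
    then show ?thesis using assms M coeff_bound_const_pos[of k] by (simp add: coeff_eq_0)
  next
    case True
    have "coeff P l = (\<Sum>i\<le>k. poly P (unit_node k i) * coeff (lagrange_basis k i) l)"
      by (subst lagrange_interpolation[OF assms(1,2)]) (simp add: coeff_sum)
    also have "\<bar>\<dots>\<bar> \<le> (\<Sum>i\<le>k. M * \<bar>coeff (lagrange_basis k i) l\<bar>)"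
      using assms(3) unit_node_in_unit_interval
      by (intro order.trans[OF sum_abs] sum_mono) (auto simp: abs_mult intro!: mult_right_mono)
    also have "\<dots> \<le> M * (\<Sum>i\<le>k. \<Sum>l\<le>k. \<bar>coeff (lagrange_basis k i) l\<bar>)"
      unfolding sum_distrib_left[symmetric]
      using True M by (intro mult_left_mono sum_mono) (auto intro: member_le_sum)
    also have "\<dots> \<le> coeff_bound_const k * M"
      unfolding coeff_bound_const_def using M by (simp add: algebra_simps)
    finally show ?thesis .
  qed
qed

lemma poly_ge_linear_part_minus_square:
  fixes P :: "real poly"
  assumes "k \<ge> 1" "degree P \<le> k" "poly P 0 = 0" "\<And>l. \<bar>coeff P l\<bar> \<le> M" "x \<in> {0..1}"
  shows "poly P x \<ge> coeff P 1 * x - real k * M * x^2"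
proof -
  have "poly P x = (\<Sum>i\<le>k. coeff P i * x ^ i)"
    using assms(2) unfolding poly_altdef
    by (intro sum.mono_neutral_left) (auto simp: coeff_eq_0)
  also have "{..k} = {0, 1} \<union> {2..k}" using assms(1) by auto
  also have "(\<Sum>i\<in>{0, 1} \<union> {2..k}. coeff P i * x ^ i)
      = coeff P 1 * x + (\<Sum>i\<in>{2..k}. coeff P i * x ^ i)"
    using assms(3) by (subst sum.union_disjoint) (auto simp: poly_0_coeff_0)
  finally have split: "poly P x = coeff P 1 * x + (\<Sum>i\<in>{2..k}. coeff P i * x ^ i)" .
  have "\<bar>coeff P i * x ^ i\<bar> \<le> M * x^2" if "i \<in> {2..k}" for i
    using that assms(4,5)
    by (auto simp: abs_mult intro!: mult_mono power_decreasing order.trans[OF abs_ge_zero assms(4)])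
  then have "- (\<Sum>i\<in>{2..k}. M * x^2) \<le> (\<Sum>i\<in>{2..k}. coeff P i * x ^ i)"
    by (smt (verit, best) sum_mono sum_negf abs_le_D2)
  moreover have "real (k - 1) * (M * x^2) \<le> real k * (M * x^2)"
    using order.trans[OF abs_ge_zero assms(4)] by (intro mult_right_mono) auto
  then have "(\<Sum>i\<in>{2..k}. M * x^2) \<le> real k * M * x^2" by (simp add: mult.assoc)
  ultimately show ?thesis using split by linarith
qed

lemma linear_coeff_sq_le:
  fixes P :: "real poly"
  assumes "k \<ge> 1" "degree P \<le> k" "poly P 0 = 0" "coeff P 1 \<ge> 0"
    and bounded: "\<And>x. x \<in> {0..1} \<Longrightarrow> lo \<le> poly P x \<and> poly P x \<le> hi"
  shows "(coeff P 1)^2 \<le> 4 * real k * coeff_bound_const k * hi * (hi - lo)"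
proof -
  define b where "b = coeff P 1"
  define Q where "Q = real k * coeff_bound_const k * (hi - lo)"
  have "lo \<le> 0" "hi \<ge> 0" using bounded[of 0] assms(3) by auto
  have coeff_le: "\<bar>coeff P l\<bar> \<le> coeff_bound_const k * (hi - lo)" for l
    using bounded \<open>lo \<le> 0\<close> \<open>hi \<ge> 0\<close>
    by (intro abs_coeff_le_of_abs_poly_le[OF assms(1,2)]) (fastforce simp: abs_le_iff)
  show ?thesis
  proof (cases "b = 0")
    case True
    then show ?thesis
      using \<open>lo \<le> 0\<close> \<open>hi \<ge> 0\<close> coeff_bound_const_pos[of k] by (simp add: b_def)
  next
    case False
    then have "b > 0" using assms(4) by (simp add: b_def)
    have "coeff_bound_const k * (hi - lo) \<ge> 0"
      using coeff_bound_const_pos[of k] \<open>lo \<le> 0\<close> \<open>hi \<ge> 0\<close> by simp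
    then have "b \<le> Q"
      using coeff_le[of 1] assms(1) unfolding Q_def b_def mult.assoc
      by (smt (verit) mult_le_cancel_right1 of_nat_1 of_nat_mono)
    with \<open>b > 0\<close> have "Q > 0" "b / (2 * Q) \<in> {0..1}" by auto
    \<comment> \<open>the lower bound b x - Q x^2 for P x is maximal at x = b / (2 Q)\<close>
    then have "hi \<ge> b * (b / (2 * Q)) - Q * (b / (2 * Q))^2"
      using poly_ge_linear_part_minus_square[OF assms(1-3) coeff_le] bounded
      unfolding Q_def b_def mult.assoc by fastforce
    also have "b * (b / (2 * Q)) - Q * (b / (2 * Q))^2 = b^2 / (4 * Q)"
      using \<open>Q > 0\<close> by (simp add: field_simps power2_eq_square)
    finally have "b^2 \<le> 4 * Q * hi"
      using \<open>Q > 0\<close> by (simp add: pos_divide_le_eq mult.commute)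
    then show ?thesis by (simp add: b_def Q_def mult_ac)
  qed
qed

section \<open>Binomial averages over subsets\<close>

definition binomial_weight :: "'a set \<Rightarrow> real \<Rightarrow> 'a set \<Rightarrow> real" where
  "binomial_weight S x T = x ^ card T * (1 - x) ^ (card S - card T)"

lemma sum_binomial_weight_Int_disjoint:
  fixes \<phi> :: "'a set \<Rightarrow> real"
  assumes "finite Q" "finite R" "Q \<inter> R = {}"
  shows "(\<Sum>T\<in>Pow (Q \<union> R). binomial_weight (Q \<union> R) x T * \<phi> (T \<inter> Q))
       = (\<Sum>V\<in>Pow Q. binomial_weight Q x V * \<phi> V)"
  using assms(2,3)
proof (induction R rule: finite_induct)
  case empty
  show ?case by (intro sum.cong refl) (auto simp: Int_absorb2)
next
  case (insert a R)
  define X where "X = Q \<union> R"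
  have X: "finite X" "a \<notin> X" using insert assms(1) by (auto simp: X_def)
  have "Q \<union> insert a R = insert a X" by (simp add: X_def)
  moreover have "(\<Sum>T\<in>Pow (insert a X). binomial_weight (insert a X) x T * \<phi> (T \<inter> Q))
      = (\<Sum>T\<in>Pow X. binomial_weight X x T * \<phi> (T \<inter> Q))"
  proof -
    have "(\<Sum>T\<in>Pow (insert a X). binomial_weight (insert a X) x T * \<phi> (T \<inter> Q))
        = (\<Sum>T\<in>Pow X. binomial_weight (insert a X) x T * \<phi> (T \<inter> Q)
                      + binomial_weight (insert a X) x (insert a T) * \<phi> (insert a T \<inter> Q))"
    proof -
      have "inj_on (insert a) (Pow X)" "Pow X \<inter> insert a ` Pow X = {}"
        using X by (auto simp: inj_on_def)
      then show ?thesis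
        using X unfolding Pow_insert by (simp add: sum.union_disjoint sum.reindex sum.distrib)
    qed
    also have "\<dots> = (\<Sum>T\<in>Pow X. binomial_weight X x T * \<phi> (T \<inter> Q))"
    proof (rule sum.cong[OF refl])
      fix T assume "T \<in> Pow X"
      then have "finite T" "a \<notin> T" "card T \<le> card X" "insert a T \<inter> Q = T \<inter> Q"
        using X insert.prems insert.hyps by (auto intro: finite_subset card_mono)
      then show "binomial_weight (insert a X) x T * \<phi> (T \<inter> Q)
            + binomial_weight (insert a X) x (insert a T) * \<phi> (insert a T \<inter> Q)
          = binomial_weight X x T * \<phi> (T \<inter> Q)"
        using X by (simp add: binomial_weight_def Suc_diff_le algebra_simps)
    qed
    finally show ?thesis .
  qed
  ultimately show ?case using insert by (simp add: X_def)
qed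

lemma sum_binomial_weight_Int:
  fixes \<phi> :: "'a set \<Rightarrow> real"
  assumes "finite S" "Q \<subseteq> S"
  shows "(\<Sum>T\<in>Pow S. binomial_weight S x T * \<phi> (T \<inter> Q)) = (\<Sum>V\<in>Pow Q. binomial_weight Q x V * \<phi> V)"
  using sum_binomial_weight_Int_disjoint[of Q "S - Q" x \<phi>] assms
  by (simp add: Un_absorb1 finite_subset)

lemma sum_binomial_weight: "finite S \<Longrightarrow> (\<Sum>T\<in>Pow S. binomial_weight S x T) = 1"
  using sum_binomial_weight_Int[of S "{}" x "\<lambda>_. 1"] by (simp add: binomial_weight_def)

lemma binomial_average_bounded:
  assumes "finite S" "x \<in> {0..1}" "\<And>T. T \<subseteq> S \<Longrightarrow> lo \<le> f T \<and> f T \<le> hi"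
  shows "lo \<le> (\<Sum>T\<in>Pow S. binomial_weight S x T * f T)"
    and "(\<Sum>T\<in>Pow S. binomial_weight S x T * f T) \<le> hi"
proof -
  have nonneg: "binomial_weight S x T \<ge> 0" for T
    using assms(2) by (simp add: binomial_weight_def)
  have "lo = (\<Sum>T\<in>Pow S. binomial_weight S x T * lo)"
    using sum_binomial_weight[OF assms(1)] by (simp add: sum_distrib_right[symmetric])
  also have "\<dots> \<le> (\<Sum>T\<in>Pow S. binomial_weight S x T * f T)"
    using assms(3) nonneg by (intro sum_mono mult_left_mono) auto
  finally show "lo \<le> (\<Sum>T\<in>Pow S. binomial_weight S x T * f T)" .
  have "(\<Sum>T\<in>Pow S. binomial_weight S x T * f T) \<le> (\<Sum>T\<in>Pow S. binomial_weight S x T * hi)"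
    using assms(3) nonneg by (intro sum_mono mult_left_mono) auto
  also have "\<dots> = hi"
    using sum_binomial_weight[OF assms(1)] by (simp add: sum_distrib_right[symmetric])
  finally show "(\<Sum>T\<in>Pow S. binomial_weight S x T * f T) \<le> hi" .
qed

definition bernstein_poly :: "nat \<Rightarrow> nat \<Rightarrow> real poly" where
  "bernstein_poly a b = monom 1 a * [:1, -1:] ^ b"

lemma poly_bernstein_poly: "poly (bernstein_poly a b) x = x ^ a * (1 - x) ^ b"
  by (simp add: bernstein_poly_def poly_monom)

lemma degree_bernstein_poly_le: "degree (bernstein_poly a b) \<le> a + b"
  unfolding bernstein_poly_def
  by (rule order.trans[OF degree_mult_le])
     (use degree_monom_le[of "1::real" a] degree_power_le[of "[:1, -1:] :: real poly" b] in simp)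

lemma coeff_one_minus_X_power_1: "coeff ([:1, -1:] ^ b :: real poly) 1 = - real b"
  by (induction b) (simp_all add: coeff_mult coeff_0_power)

lemma coeff_bernstein_poly_1:
  "coeff (bernstein_poly a b) 1 = (if a = 0 then - real b else if a = 1 then 1 else 0)"
  using coeff_one_minus_X_power_1[of b]
  by (cases a) (simp_all add: bernstein_poly_def coeff_monom_mult coeff_0_power)

definition binomial_poly :: "'a set \<Rightarrow> ('a set \<Rightarrow> real) \<Rightarrow> real poly" where
  "binomial_poly S f = (\<Sum>T\<in>Pow S. smult (f T) (bernstein_poly (card T) (card S - card T)))"

lemma poly_binomial_poly:
  "poly (binomial_poly S f) x = (\<Sum>T\<in>Pow S. binomial_weight S x T * f T)"
  by (simp add: binomial_poly_def poly_sum poly_bernstein_poly binomial_weight_def mult_ac)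

lemma degree_binomial_poly_le:
  assumes "finite S" shows "degree (binomial_poly S f) \<le> card S"
  unfolding binomial_poly_def
proof (intro degree_sum_le order.trans[OF degree_smult_le])
  fix T assume "T \<in> Pow S"
  then have "card T \<le> card S" using assms by (simp add: card_mono)
  then show "degree (bernstein_poly (card T) (card S - card T)) \<le> card S"
    using degree_bernstein_poly_le[of "card T" "card S - card T"] by simp
qed (use assms in simp)

lemma coeff_binomial_poly_1:
  assumes "finite S" "f {} = 0"
  shows "coeff (binomial_poly S f) 1 = (\<Sum>i\<in>S. f {i})"
proof -
  have "coeff (binomial_poly S f) 1 = (\<Sum>T\<in>Pow S. if card T = 1 then f T else 0)"
    unfolding binomial_poly_def coeff_sum coeff_smult coeff_bernstein_poly_1
    using assms by (intro sum.cong) (auto simp: card_eq_0_iff finite_subset)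
  also have "\<dots> = (\<Sum>T\<in>(\<lambda>i. {i}) ` S. f T)"
    using assms(1) by (subst sum.inter_filter[symmetric]) (auto intro!: sum.cong simp: card_1_singleton_iff)
  also have "\<dots> = (\<Sum>i\<in>S. f {i})" by (simp add: sum.reindex)
  finally show ?thesis .
qed

lemma binomial_poly_local_sum:
  fixes f :: "'a set \<Rightarrow> real" and g :: "'e \<Rightarrow> 'a set \<Rightarrow> real"
  assumes "finite S" "\<And>e. e \<in> E \<Longrightarrow> Q e \<subseteq> S"
    and "\<And>T. T \<subseteq> S \<Longrightarrow> f T = (\<Sum>e\<in>E. g e (T \<inter> Q e))"
  shows "binomial_poly S f = (\<Sum>e\<in>E. binomial_poly (Q e) (g e))"
proof (rule poly_ext)
  fix x
  have "poly (binomial_poly S f) x = (\<Sum>e\<in>E. \<Sum>T\<in>Pow S. binomial_weight S x T * g e (T \<inter> Q e))"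
    unfolding poly_binomial_poly using assms(3)
    by (simp add: sum_distrib_left sum.swap[of _ "Pow S"])
  also have "\<dots> = (\<Sum>e\<in>E. \<Sum>V\<in>Pow (Q e). binomial_weight (Q e) x V * g e V)"
    using assms(1,2) by (intro sum.cong refl sum_binomial_weight_Int)
  finally show "poly (binomial_poly S f) x = poly (\<Sum>e\<in>E. binomial_poly (Q e) (g e)) x"
    by (simp add: poly_sum poly_binomial_poly)
qed

lemma sum_first_differences_sq_le:
  fixes F :: "'a set \<Rightarrow> real" and g :: "'e \<Rightarrow> 'a set \<Rightarrow> real"
  assumes "k \<ge> 1" "finite S" "finite E"
    and local: "\<And>e. e \<in> E \<Longrightarrow> Q e \<subseteq> S \<and> card (Q e) \<le> k"
    and decomp: "\<And>T. T \<subseteq> S \<Longrightarrow> F T = (\<Sum>e\<in>E. g e (T \<inter> Q e))"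
    and bounded: "\<And>T. T \<subseteq> S \<Longrightarrow> lo \<le> F T \<and> F T \<le> hi"
    and nonneg: "(\<Sum>i\<in>S. F {i} - F {}) \<ge> 0"
  shows "(\<Sum>i\<in>S. F {i} - F {})^2 \<le> 4 * real k * coeff_bound_const k * (hi - F {}) * (hi - lo)"
proof -
  \<comment> \<open>R x is the mean of F T - F {} when T contains each element of S independently with
     probability x; the decomposition of F makes it a sum of polynomials of degree at most k.\<close>
  define R where "R = binomial_poly S (\<lambda>T. F T - F {})"
  have R_local: "R = (\<Sum>e\<in>E. binomial_poly (Q e) (\<lambda>V. g e V - g e {}))"
    unfolding R_def using assms(2) local
    by (intro binomial_poly_local_sum) (auto simp: decomp sum_subtractf)
  have "degree R \<le> k"
    unfolding R_local
  proof (rule degree_sum_le[OF assms(3)])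
    fix e assume "e \<in> E"
    then have "finite (Q e)" "card (Q e) \<le> k" using local assms(2) by (auto intro: finite_subset)
    then show "degree (binomial_poly (Q e) (\<lambda>V. g e V - g e {})) \<le> k"
      using degree_binomial_poly_le by (blast intro: order.trans)
  qed
  moreover have "poly R 0 = 0"
    unfolding R_def poly_binomial_poly binomial_weight_def
    using assms(2) by (intro sum.neutral) (auto simp: card_gt_0_iff intro: finite_subset)
  moreover have "coeff R 1 = (\<Sum>i\<in>S. F {i} - F {})"
    unfolding R_def using assms(2) by (rule coeff_binomial_poly_1) simp
  moreover have "lo - F {} \<le> poly R x \<and> poly R x \<le> hi - F {}" if "x \<in> {0..1}" for x
    unfolding R_def poly_binomial_poly
    using binomial_average_bounded[OF assms(2) that, of "lo - F {}" "\<lambda>T. F T - F {}" "hi - F {}"] bounded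
    by auto
  ultimately have "(coeff R 1)^2 \<le> 4 * real k * coeff_bound_const k * (hi - F {}) * ((hi - F {}) - (lo - F {}))"
    using nonneg by (intro linear_coeff_sq_le[OF assms(1)]) auto
  then show ?thesis using \<open>coeff R 1 = _\<close> by simp
qed

section \<open>Permutations acting on k-subsets\<close>

lemma permutes_image_ksubsets:
  assumes "p permutes V" "e \<in> ksubsets V k" shows "p ` e \<in> ksubsets V k"
  using assms permutes_image[OF assms(1)] card_image[OF inj_on_subset[OF permutes_inj[OF assms(1)]]]
  unfolding ksubsets_def by blast

lemma bij_betw_image_ksubsets:
  assumes "p permutes V" shows "bij_betw ((`) p) (ksubsets V k) (ksubsets V k)"
proof (rule bij_betw_byWitness[where f' = "(`) (inv p)"])
  show "\<forall>e\<in>ksubsets V k. inv p ` p ` e = e" "\<forall>e\<in>ksubsets V k. p ` inv p ` e = e"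
    using permutes_bij[OF assms] by (simp_all add: image_inv_f_f bij_is_inj image_f_inv_f bij_is_surj)
  show "(`) p ` ksubsets V k \<subseteq> ksubsets V k" "(`) (inv p) ` ksubsets V k \<subseteq> ksubsets V k"
    using permutes_image_ksubsets assms permutes_inv[OF assms] by blast+
qed

lemma permw_compose: "bij t \<Longrightarrow> bij a \<Longrightarrow> permw (t \<circ> a) w e = permw a w (inv t ` e)"
  unfolding permw_def by (simp add: o_inv_distrib image_comp)

lemma ip_permw_compose_left:
  assumes "t permutes V" "bij a" "bij b"
  shows "ip V k (permw (t \<circ> a) w) (permw (t \<circ> b) u) = ip V k (permw a w) (permw b u)"
proof -
  have "ip V k (permw (t \<circ> a) w) (permw (t \<circ> b) u)
      = (\<Sum>e\<in>ksubsets V k. (\<lambda>e. permw a w e * permw b u e) (inv t ` e))"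
    unfolding ip_def using permutes_bij[OF assms(1)] assms(2,3) by (simp add: permw_compose)
  also have "\<dots> = ip V k (permw a w) (permw b u)"
    unfolding ip_def
    by (rule sum.reindex_bij_betw[OF bij_betw_image_ksubsets[OF permutes_inv[OF assms(1)]]])
  finally show ?thesis .
qed

lemma ip_permw_permw:
  assumes "p permutes V" "s permutes V"
  shows "ip V k (permw p w) (permw s u) = ip V k (permw (inv s \<circ> p) w) u"
proof -
  have "ip V k (permw (s \<circ> (inv s \<circ> p)) w) (permw (s \<circ> id) u) = ip V k (permw (inv s \<circ> p) w) (permw id u)"
    using assms by (intro ip_permw_compose_left) (auto intro: bij_comp permutes_bij permutes_inv)
  moreover have "s \<circ> (inv s \<circ> p) = p" by (simp add: o_assoc permutes_inv_o[OF assms(2)])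
  moreover have "permw id u = u" by (simp add: permw_def fun_eq_iff)
  ultimately show ?thesis by simp
qed

lemma ksubsets_permutes_transitive:
  assumes "finite V" "e \<in> ksubsets V k" "e' \<in> ksubsets V k"
  obtains t where "t permutes V" "t ` e' = e"
proof -
  have sub: "e \<subseteq> V" "e' \<subseteq> V" and card: "card e' = card e"
    using assms(2,3) unfolding ksubsets_def by auto
  then have fin: "finite e" "finite e'" using assms(1) finite_subset by auto
  obtain g where g: "bij_betw g e' e" using finite_same_card_bij[OF fin(2,1) card] by blast
  have "card (V - e') = card (V - e)" using sub fin card by (simp add: card_Diff_subset)
  then obtain h where h: "bij_betw h (V - e') (V - e)"
    using finite_same_card_bij[of "V - e'" "V - e"] assms(1) by auto
  have "bij_betw (\<lambda>x. if x \<in> e' then g x else h x) (e' \<union> (V - e')) (e \<union> (V - e))"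
    by (rule bij_betw_disjoint_Un[OF g h]) auto
  moreover have "e' \<union> (V - e') = V" "e \<union> (V - e) = V" using sub by auto
  ultimately have bij: "bij_betw (\<lambda>x. if x \<in> e' then g x else h x) V V" by simp
  define t where "t x = (if x \<in> V then (if x \<in> e' then g x else h x) else x)" for x
  have "bij_betw t V V" using bij unfolding t_def by (rule bij_betw_cong[THEN iffD1, rotated]) auto
  then have "t permutes V" by (rule bij_imp_permutes) (auto simp: t_def)
  moreover have "t ` e' = e"
  proof -
    have "t ` e' = g ` e'" using sub unfolding t_def by (intro image_cong) auto
    then show ?thesis using g by (simp add: bij_betw_def)
  qed
  ultimately show ?thesis using that by blast
qed

lemma finite_perms: "finite V \<Longrightarrow> finite (perms V)"
  unfolding perms_def by (rule finite_permutations)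

lemma card_perms_pos: "finite V \<Longrightarrow> card (perms V) > 0"
  unfolding perms_def by (subst card_permutations[OF refl]) auto

lemma perms_nonempty: "perms V \<noteq> {}"
  unfolding perms_def using permutes_id by blast

lemma sum_perms_permw:
  assumes "finite V" "e \<in> ksubsets V k"
  shows "(\<Sum>p\<in>perms V. permw p w e) = real (card (perms V)) * dens V k w"
proof -
  define c where "c e = (\<Sum>p\<in>perms V. permw p w e)" for e
  have finite: "finite (ksubsets V k)"
    using assms(1) unfolding ksubsets_def by (auto intro: finite_subset[of _ "Pow V"])
  have const: "c e' = c e" if e': "e' \<in> ksubsets V k" for e'
  proof -
    obtain t where t: "t permutes V" "t ` e = e'"
      using ksubsets_permutes_transitive[OF assms(1) e' assms(2)] .
    have "c e' = (\<Sum>p\<in>perms V. permw (t \<circ> p) w e')"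
      unfolding c_def perms_def by (rule setum_permutations_compose_left[OF t(1)])
    also have "\<dots> = c e"
      unfolding c_def perms_def using t permutes_bij[OF t(1)]
      by (intro sum.cong) (auto simp: permw_compose permutes_bij image_inv_f_f bij_is_inj)
    finally show ?thesis .
  qed
  have "(\<Sum>e'\<in>ksubsets V k. c e') = (\<Sum>p\<in>perms V. \<Sum>e'\<in>ksubsets V k. permw p w e')"
    unfolding c_def by (rule sum.swap)
  also have "\<dots> = (\<Sum>p\<in>perms V. \<Sum>e'\<in>ksubsets V k. w e')"
    unfolding permw_def perms_def
    by (intro sum.cong refl sum.reindex_bij_betw bij_betw_image_ksubsets permutes_inv) simp
  finally have "real (card V choose k) * c e = real (card (perms V)) * (\<Sum>e'\<in>ksubsets V k. w e')"
    using const n_subsets[OF assms(1)] by (simp add: ksubsets_def)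
  moreover have "card V choose k > 0"
    using assms unfolding ksubsets_def by (auto intro: card_mono)
  ultimately show ?thesis by (simp add: c_def dens_def field_simps)
qed

lemma sum_perms_ip_permw:
  assumes "finite V" "k \<le> card V"
  shows "(\<Sum>p\<in>perms V. ip V k (permw p w) u)
       = real (card (perms V)) * (dens V k w * dens V k u * real (card V choose k))"
proof -
  have "card (ksubsets V k) = card V choose k"
    using n_subsets[OF assms(1)] by (simp add: ksubsets_def)
  then have sum_u: "(\<Sum>e\<in>ksubsets V k. u e) = dens V k u * real (card V choose k)"
    using assms by (simp add: dens_def)
  have "(\<Sum>p\<in>perms V. ip V k (permw p w) u)
      = (\<Sum>e\<in>ksubsets V k. real (card (perms V)) * dens V k w * u e)"
    unfolding ip_def
    by (subst sum.swap) (simp add: sum_distrib_right[symmetric] sum_perms_permw[OF assms(1)])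
  also have "\<dots> = real (card (perms V)) * dens V k w * (\<Sum>e\<in>ksubsets V k. u e)"
    by (rule sum_distrib_left[symmetric])
  finally show ?thesis by (simp add: sum_u)
qed

lemma disc_nonneg:
  assumes "finite V" "k \<le> card V"
  shows "disc_plus V k w u \<ge> 0" "disc_minus V k w u \<ge> 0"
proof -
  define f where "f p = ip V k (permw p w) u" for p
  have "finite (perms V)" "perms V \<noteq> {}" "real (card (perms V)) > 0"
    using assms(1) finite_perms card_perms_pos by (auto simp: card_gt_0_iff)
  moreover have "(\<Sum>p\<in>perms V. f p)
      = real (card (perms V)) * (dens V k w * dens V k u * real (card V choose k))"
    unfolding f_def by (rule sum_perms_ip_permw[OF assms])
  moreover have "real (card (perms V)) * Min (f ` perms V) \<le> (\<Sum>p\<in>perms V. f p)"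
    "(\<Sum>p\<in>perms V. f p) \<le> real (card (perms V)) * Max (f ` perms V)"
    using calculation(1,2) by (auto intro: sum_bounded_below sum_bounded_above)
  ultimately show "disc_plus V k w u \<ge> 0" "disc_minus V k w u \<ge> 0"
    unfolding disc_plus_def disc_minus_def f_def[symmetric] by simp_all
qed

lemma ip_permw_permw_bounds:
  assumes "finite V" "p permutes V" "s permutes V"
  shows "Min ((\<lambda>q. ip V k (permw q w) u) ` perms V) \<le> ip V k (permw p w) (permw s u)"
    and "ip V k (permw p w) (permw s u) \<le> Max ((\<lambda>q. ip V k (permw q w) u) ` perms V)"
proof -
  have "inv s \<circ> p \<in> perms V"
    using assms(2,3) by (simp add: perms_def permutes_compose permutes_inv)
  then show "Min ((\<lambda>q. ip V k (permw q w) u) ` perms V) \<le> ip V k (permw p w) (permw s u)"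
    "ip V k (permw p w) (permw s u) \<le> Max ((\<lambda>q. ip V k (permw q w) u) ` perms V)"
    unfolding ip_permw_permw[OF assms(2,3)] using finite_perms[OF assms(1)] by auto
qed

lemma sum_perms_ip_permw_permw:
  assumes "finite V" "k \<le> card V" "s permutes V"
  shows "(\<Sum>p\<in>perms V. ip V k (permw p w) (permw s u))
       = real (card (perms V)) * (dens V k w * dens V k u * real (card V choose k))"
proof -
  have "(\<Sum>p\<in>perms V. ip V k (permw p w) (permw s u)) = (\<Sum>p\<in>perms V. ip V k (permw (inv s \<circ> p) w) u)"
    using assms(3) by (intro sum.cong refl ip_permw_permw) (auto simp: perms_def)
  also have "\<dots> = (\<Sum>p\<in>perms V. ip V k (permw p w) u)"
    unfolding perms_def by (rule setum_permutations_compose_left[OF permutes_inv[OF assms(3)], symmetric])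
  finally show ?thesis using sum_perms_ip_permw[OF assms(1,2)] by simp
qed

lemma sum_perms_Max_minus_ip_permw:
  assumes "finite V" "k \<le> card V"
  shows "(\<Sum>p\<in>perms V. \<Sum>s\<in>perms V.
            Max ((\<lambda>q. ip V k (permw q w) u) ` perms V) - ip V k (permw p w) (permw s u))
       = real (card (perms V))^2 * disc_plus V k w u"
proof -
  have "(\<Sum>p\<in>perms V. \<Sum>s\<in>perms V.
            Max ((\<lambda>q. ip V k (permw q w) u) ` perms V) - ip V k (permw p w) (permw s u))
      = (\<Sum>s\<in>perms V. \<Sum>p\<in>perms V.
            Max ((\<lambda>q. ip V k (permw q w) u) ` perms V) - ip V k (permw p w) (permw s u))"
    by (rule sum.swap)
  also have "\<dots> = (\<Sum>s\<in>perms V. real (card (perms V)) * disc_plus V k w u)"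
  proof (rule sum.cong[OF refl])
    fix s assume "s \<in> perms V"
    then have "s permutes V" by (simp add: perms_def)
    then show "(\<Sum>p\<in>perms V. Max ((\<lambda>q. ip V k (permw q w) u) ` perms V) - ip V k (permw p w) (permw s u))
        = real (card (perms V)) * disc_plus V k w u"
      using sum_perms_ip_permw_permw[OF assms] by (simp add: sum_subtractf disc_plus_def right_diff_distrib)
  qed
  finally show ?thesis by (simp add: power2_eq_square)
qed

section \<open>Swapping disjoint pairs\<close>

(* block_swap T is the product of the disjoint transpositions (2i-1 2i), i \<in> T;
   pair_index maps both 2i-1 and 2i to i. *)
definition pair_index :: "nat \<Rightarrow> nat" where
  "pair_index x = (x + 1) div 2"

definition block_swap :: "nat set \<Rightarrow> nat \<Rightarrow> nat" where
  "block_swap T x = (if pair_index x \<in> T then (if odd x then x + 1 else x - 1) else x)"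

lemma pair_index_block_swap: "pair_index (block_swap T x) = pair_index x"
  unfolding block_swap_def pair_index_def by (cases "x = 0") (auto elim!: oddE evenE)

lemma block_swap_block_swap: "block_swap T (block_swap T x) = x"
  using pair_index_block_swap[of T x] unfolding block_swap_def
  by (cases "x = 0") (auto elim!: oddE evenE split: if_splits)

lemma bij_block_swap: "bij (block_swap T)"
  by (rule o_bij[of "block_swap T"]) (simp_all add: fun_eq_iff block_swap_block_swap)

lemma inv_block_swap: "inv (block_swap T) = block_swap T"
  by (rule inv_unique_comp) (simp_all add: fun_eq_iff block_swap_block_swap)

lemma block_swap_permutes:
  assumes "T \<subseteq> {1..n div 2}" shows "block_swap T permutes {1..n}"
  unfolding permutes_def
proof (intro conjI allI impI)
  fix x assume x: "x \<notin> {1..n}"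
  have "pair_index x \<notin> T"
  proof
    assume "pair_index x \<in> T"
    then have "1 \<le> pair_index x" "pair_index x \<le> n div 2" using assms by auto
    then show False using x unfolding pair_index_def by auto
  qed
  then show "block_swap T x = x" by (simp add: block_swap_def)
next
  fix y show "\<exists>!x. block_swap T x = y"
    using block_swap_block_swap by (metis bij_block_swap bij_iff)
qed

lemma block_swap_empty: "block_swap {} = id"
  by (simp add: fun_eq_iff block_swap_def)

lemma block_swap_singleton:
  "i \<ge> 1 \<Longrightarrow> block_swap {i} = Transposition.transpose (2 * i - 1) (2 * i)"
  by (auto simp: fun_eq_iff block_swap_def pair_index_def Transposition.transpose_def elim!: oddE evenE)

lemma block_swap_image_cong:
  assumes "A \<inter> pair_index ` e = B \<inter> pair_index ` e"
  shows "block_swap A ` e = block_swap B ` e"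
proof (rule image_cong[OF refl])
  fix x assume "x \<in> e"
  then have "pair_index x \<in> A \<longleftrightarrow> pair_index x \<in> B" using assms by blast
  then show "block_swap A x = block_swap B x" by (simp add: block_swap_def)
qed

lemma ip_permw_block_swap_local:
  assumes "p permutes V" "T \<subseteq> S"
  shows "ip V k (permw (block_swap T \<circ> p) w) v
    = (\<Sum>e\<in>ksubsets V k. w (inv p ` block_swap (T \<inter> (pair_index ` e \<inter> S)) ` e) * v e)"
  unfolding ip_def permw_def
proof (intro sum.cong refl arg_cong2[where f = "(*)"])
  fix e
  have "inv (block_swap T \<circ> p) = inv p \<circ> block_swap T"
    using permutes_bij[OF assms(1)] by (simp add: o_inv_distrib bij_block_swap inv_block_swap)
  moreover have "block_swap T ` e = block_swap (T \<inter> (pair_index ` e \<inter> S)) ` e"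
    using assms(2) by (intro block_swap_image_cong) auto
  ultimately show "w (inv (block_swap T \<circ> p) ` e) = w (inv p ` block_swap (T \<inter> (pair_index ` e \<inter> S)) ` e)"
    by (metis image_comp)
qed

definition swap_gain ::
  "nat set \<Rightarrow> nat \<Rightarrow> (nat set \<Rightarrow> real) \<Rightarrow> (nat set \<Rightarrow> real) \<Rightarrow> nat \<Rightarrow> (nat \<Rightarrow> nat) \<Rightarrow> (nat \<Rightarrow> nat) \<Rightarrow> real"
  where
  "swap_gain V k w u i p s =
     ip V k (permw (Transposition.transpose (2 * i - 1) (2 * i) \<circ> p) w) (permw s u)
     - ip V k (permw p w) (permw s u)"

lemma sum_max_zero_eq_sum_pos:
  fixes f :: "'a \<Rightarrow> real"
  assumes "finite A"
  shows "(\<Sum>i\<in>A. max (f i) 0) = (\<Sum>i\<in>{i \<in> A. f i > 0}. f i)"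
proof -
  have "(\<Sum>i\<in>A. max (f i) 0) = (\<Sum>i\<in>A. if f i > 0 then f i else 0)"
    by (intro sum.cong) auto
  then show ?thesis using assms by (simp add: sum.inter_filter)
qed

lemma sum_swap_gains_sq_le:
  fixes w u :: "nat set \<Rightarrow> real"
  assumes "k \<ge> 1" "p permutes {1..n}"
    and bounded: "\<And>q. q permutes {1..n} \<Longrightarrow>
      lo \<le> ip {1..n} k (permw q w) (permw s u) \<and> ip {1..n} k (permw q w) (permw s u) \<le> hi"
  shows "(\<Sum>i\<in>{1..n div 2}. max (swap_gain {1..n} k w u i p s) 0)^2
     \<le> 4 * real k * coeff_bound_const k * (hi - ip {1..n} k (permw p w) (permw s u)) * (hi - lo)"
proof -
  \<comment> \<open>Only the pairs with positive gain are swapped, so the first differences are all positive.\<close>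
  define S where "S = {i \<in> {1..n div 2}. swap_gain {1..n} k w u i p s > 0}"
  define F where "F T = ip {1..n} k (permw (block_swap T \<circ> p) w) (permw s u)" for T
  have F_singleton: "F {i} - F {} = swap_gain {1..n} k w u i p s" if "i \<in> S" for i
    using that by (simp add: S_def F_def swap_gain_def block_swap_singleton block_swap_empty)
  have "(\<Sum>i\<in>S. F {i} - F {})^2 \<le> 4 * real k * coeff_bound_const k * (hi - F {}) * (hi - lo)"
  proof (rule sum_first_differences_sq_le[OF assms(1)])
    show "finite S" "finite (ksubsets {1..n} k)"
      by (auto simp: S_def ksubsets_def intro: finite_subset[of _ "Pow {1..n}"])
    show "pair_index ` e \<inter> S \<subseteq> S \<and> card (pair_index ` e \<inter> S) \<le> k" if "e \<in> ksubsets {1..n} k" for e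
    proof -
      have "finite e" "card e = k" using that finite_subset[of e "{1..n}"] by (auto simp: ksubsets_def)
      then show ?thesis
        using card_image_le[of e pair_index] card_mono[of "pair_index ` e" "pair_index ` e \<inter> S"] by auto
    qed
    show "F T = (\<Sum>e\<in>ksubsets {1..n} k.
        (\<lambda>e V. w (inv p ` block_swap V ` e) * permw s u e) e (T \<inter> (pair_index ` e \<inter> S)))"
      if "T \<subseteq> S" for T
      unfolding F_def using ip_permw_block_swap_local[OF assms(2) that] by simp
    show "lo \<le> F T \<and> F T \<le> hi" if "T \<subseteq> S" for T
      unfolding F_def using that assms(2)
      by (intro bounded permutes_compose block_swap_permutes) (auto simp: S_def)
    show "(\<Sum>i\<in>S. F {i} - F {}) \<ge> 0"
      using F_singleton by (intro sum_nonneg) (auto simp: S_def)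
  qed
  moreover have "(\<Sum>i\<in>{1..n div 2}. max (swap_gain {1..n} k w u i p s) 0) = (\<Sum>i\<in>S. F {i} - F {})"
  proof -
    have "(\<Sum>i\<in>{1..n div 2}. max (swap_gain {1..n} k w u i p s) 0) = (\<Sum>i\<in>S. swap_gain {1..n} k w u i p s)"
      unfolding S_def by (rule sum_max_zero_eq_sum_pos) simp
    also have "\<dots> = (\<Sum>i\<in>S. F {i} - F {})"
      by (rule sum.cong[OF refl]) (simp add: F_singleton)
    finally show ?thesis .
  qed
  moreover have "F {} = ip {1..n} k (permw p w) (permw s u)" by (simp add: F_def block_swap_empty)
  ultimately show ?thesis by simp
qed

lemma sum_swap_gains_sq_le_disc:
  fixes w u :: "nat set \<Rightarrow> real"
  assumes "k \<ge> 1" "p permutes {1..n}" "s permutes {1..n}"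
  shows "(\<Sum>i\<in>{1..n div 2}. max (swap_gain {1..n} k w u i p s) 0)^2
    \<le> 4 * real k * coeff_bound_const k
      * (Max ((\<lambda>q. ip {1..n} k (permw q w) u) ` perms {1..n}) - ip {1..n} k (permw p w) (permw s u))
      * (disc_plus {1..n} k w u + disc_minus {1..n} k w u)"
proof -
  note bounds = ip_permw_permw_bounds[OF finite_atLeastAtMost _ assms(3), of _ k w u]
  have "disc_plus {1..n} k w u + disc_minus {1..n} k w u
      = Max ((\<lambda>q. ip {1..n} k (permw q w) u) ` perms {1..n}) - Min ((\<lambda>q. ip {1..n} k (permw q w) u) ` perms {1..n})"
    by (simp add: disc_plus_def disc_minus_def)
  then show ?thesis
    by (simp only:) (rule sum_swap_gains_sq_le[OF assms(1,2)], intro conjI bounds)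
qed

section \<open>Averaging over all permutations\<close>

lemma permutes_first_pair_to_pair:
  fixes n i :: nat
  assumes "i \<in> {1..n div 2}"
  obtains t where "t permutes {1..n}" "t 1 = 2 * i - 1" "t 2 = 2 * i"
proof (cases "i = 1")
  case True
  then show ?thesis using that[of id] by (simp add: permutes_id)
next
  case False
  then have "2 \<le> i" "2 * i \<le> n" using assms by auto
  define t where "t = Transposition.transpose 1 (2 * i - 1) \<circ> Transposition.transpose 2 (2 * i)"
  have "t permutes {1..n}"
    unfolding t_def using \<open>2 \<le> i\<close> \<open>2 * i \<le> n\<close> by (intro permutes_compose permutes_swap_id) auto
  moreover have "t 1 = 2 * i - 1" "t 2 = 2 * i"
    unfolding t_def using \<open>2 \<le> i\<close> by (auto simp: Transposition.transpose_def)
  ultimately show ?thesis by (rule that)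
qed

lemma swap_gain_compose_left:
  assumes "t permutes V" "t 1 = 2 * i - 1" "t 2 = 2 * i" "bij p" "bij s"
  shows "swap_gain V k w u i (t \<circ> p) (t \<circ> s) = swap_gain V k w u 1 p s"
proof -
  have "bij t" using assms(1) by (rule permutes_bij)
  moreover have "inv t (2 * i - 1) = 1" "inv t (2 * i) = 2"
    using permutes_inverses(2)[OF assms(1)] assms(2,3) by metis+
  ultimately have "Transposition.transpose (2 * i - 1) (2 * i) \<circ> t = t \<circ> Transposition.transpose 1 2"
    by (simp add: transpose_comp_eq)
  then have "Transposition.transpose (2 * i - 1) (2 * i) \<circ> (t \<circ> p) = t \<circ> (Transposition.transpose 1 2 \<circ> p)"
    by (simp add: o_assoc)
  then show ?thesis
    unfolding swap_gain_def using assms(1,4,5)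
    by (simp add: ip_permw_compose_left bij_comp)
qed

lemma sum_swap_gain_eq_sum_swap_gain_1:
  assumes "i \<in> {1..n div 2}"
  shows "(\<Sum>p\<in>perms {1..n}. \<Sum>s\<in>perms {1..n}. g (swap_gain {1..n} k w u i p s))
       = (\<Sum>p\<in>perms {1..n}. \<Sum>s\<in>perms {1..n}. g (swap_gain {1..n} k w u 1 p s))"
proof -
  obtain t where t: "t permutes {1..n}" "t 1 = 2 * i - 1" "t 2 = 2 * i"
    using permutes_first_pair_to_pair[OF assms] .
  have "(\<Sum>p\<in>perms {1..n}. \<Sum>s\<in>perms {1..n}. g (swap_gain {1..n} k w u i p s))
      = (\<Sum>p\<in>perms {1..n}. \<Sum>s\<in>perms {1..n}. g (swap_gain {1..n} k w u i (t \<circ> p) (t \<circ> s)))"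
    unfolding perms_def
    by (subst setum_permutations_compose_left[OF t(1)], rule sum.cong[OF refl],
        rule setum_permutations_compose_left[OF t(1)])
  also have "\<dots> = (\<Sum>p\<in>perms {1..n}. \<Sum>s\<in>perms {1..n}. g (swap_gain {1..n} k w u 1 p s))"
    unfolding perms_def using t by (intro sum.cong refl) (simp add: swap_gain_compose_left permutes_bij)
  finally show ?thesis .
qed

lemma sum_perms_swap_gain_1:
  assumes "n \<ge> 2"
  shows "(\<Sum>p\<in>perms {1..n}. swap_gain {1..n} k w u 1 p s) = 0"
proof -
  have "Transposition.transpose 1 2 permutes {1..n}"
    using assms by (intro permutes_swap_id) auto
  then have "(\<Sum>p\<in>perms {1..n}. ip {1..n} k (permw (Transposition.transpose 1 2 \<circ> p) w) (permw s u))
      = (\<Sum>p\<in>perms {1..n}. ip {1..n} k (permw p w) (permw s u))"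
    unfolding perms_def by (rule setum_permutations_compose_left[symmetric])
  then show ?thesis by (simp add: swap_gain_def sum_subtractf)
qed

lemma sum_max_swap_gain:
  assumes "i \<in> {1..n div 2}"
  shows "(\<Sum>p\<in>perms {1..n}. \<Sum>s\<in>perms {1..n}. max (swap_gain {1..n} k w u i p s) 0)
       = real (card (perms {1..n}))^2 * gamma_xy {1..n} k 1 2 w u / 2"
proof -
  have "n \<ge> 2" using assms by auto
  have "(\<Sum>p\<in>perms {1..n}. \<Sum>s\<in>perms {1..n}. max (swap_gain {1..n} k w u i p s) 0)
      = (\<Sum>p\<in>perms {1..n}. \<Sum>s\<in>perms {1..n}. max (swap_gain {1..n} k w u 1 p s) 0)"
    by (rule sum_swap_gain_eq_sum_swap_gain_1[OF assms])
  also have "\<dots> = (\<Sum>p\<in>perms {1..n}. \<Sum>s\<in>perms {1..n}.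
           (\<bar>swap_gain {1..n} k w u 1 p s\<bar> + swap_gain {1..n} k w u 1 p s) / 2)"
    by (intro sum.cong refl) auto
  also have "\<dots> = (\<Sum>p\<in>perms {1..n}. \<Sum>s\<in>perms {1..n}. \<bar>swap_gain {1..n} k w u 1 p s\<bar>) / 2"
  proof -
    have "(\<Sum>p\<in>perms {1..n}. \<Sum>s\<in>perms {1..n}. swap_gain {1..n} k w u 1 p s)
        = (\<Sum>s\<in>perms {1..n}. \<Sum>p\<in>perms {1..n}. swap_gain {1..n} k w u 1 p s)"
      by (rule sum.swap)
    also have "\<dots> = 0"
      by (intro sum.neutral ballI sum_perms_swap_gain_1[OF \<open>n \<ge> 2\<close>])
    finally show ?thesis by (simp add: sum.distrib sum_divide_distrib[symmetric])
  qed
  also have "(\<Sum>p\<in>perms {1..n}. \<Sum>s\<in>perms {1..n}. \<bar>swap_gain {1..n} k w u 1 p s\<bar>)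
      = real (card (perms {1..n}))^2 * gamma_xy {1..n} k 1 2 w u"
    using card_perms_pos[of "{1..n}"]
    by (simp add: gamma_xy_def swap_gain_def abs_minus_commute)
  finally show ?thesis by simp
qed

lemma sum_perms_sum_max_swap_gains:
  "(\<Sum>p\<in>perms {1..n}. \<Sum>s\<in>perms {1..n}. \<Sum>i\<in>{1..n div 2}. max (swap_gain {1..n} k w u i p s) 0)
     = real (card (perms {1..n}))^2 * (real (n div 2) * gamma_xy {1..n} k 1 2 w u / 2)"
proof -
  have "(\<Sum>p\<in>perms {1..n}. \<Sum>s\<in>perms {1..n}. \<Sum>i\<in>{1..n div 2}. max (swap_gain {1..n} k w u i p s) 0)
      = (\<Sum>p\<in>perms {1..n}. \<Sum>i\<in>{1..n div 2}. \<Sum>s\<in>perms {1..n}. max (swap_gain {1..n} k w u i p s) 0)"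
    by (intro sum.cong refl sum.swap)
  also have "\<dots> = (\<Sum>i\<in>{1..n div 2}. \<Sum>p\<in>perms {1..n}. \<Sum>s\<in>perms {1..n}. max (swap_gain {1..n} k w u i p s) 0)"
    by (rule sum.swap)
  also have "\<dots> = (\<Sum>i\<in>{1..n div 2}. real (card (perms {1..n}))^2 * gamma_xy {1..n} k 1 2 w u / 2)"
    by (intro sum.cong refl sum_max_swap_gain)
  finally show ?thesis by (simp add: algebra_simps)
qed

lemma sum_sq_le_sum_mult_sum:
  fixes X a b :: "'i \<Rightarrow> real"
  assumes "\<And>j. j \<in> A \<Longrightarrow> (X j)^2 \<le> a j * b j"
    and "\<And>j. j \<in> A \<Longrightarrow> a j \<ge> 0" "\<And>j. j \<in> A \<Longrightarrow> b j \<ge> 0" "sum X A \<ge> 0"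
  shows "(sum X A)^2 \<le> sum a A * sum b A"
proof -
  have "X j \<le> sqrt (a j) * sqrt (b j)" if "j \<in> A" for j
    using real_sqrt_le_mono[OF assms(1)[OF that]] assms(2,3)[OF that]
    by (simp add: real_sqrt_mult)
  then have "(sum X A)^2 \<le> (\<Sum>j\<in>A. sqrt (a j) * sqrt (b j))^2"
    using assms(4) by (intro power_mono sum_mono) auto
  also have "\<dots> \<le> (\<Sum>j\<in>A. (sqrt (a j))^2) * (\<Sum>j\<in>A. (sqrt (b j))^2)"
    by (rule Cauchy_Schwarz_ineq_sum)
  also have "\<dots> = sum a A * sum b A"
    using assms(2,3) by (simp cong: sum.cong)
  finally show ?thesis .
qed

lemma ip_permw_uminus: "ip V k (permw p (\<lambda>e. - w e)) u = - ip V k (permw p w) u"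
  by (simp add: ip_def permw_def sum_negf)

lemma dens_uminus: "dens V k (\<lambda>e. - w e) = - dens V k w"
  by (simp add: dens_def sum_negf)

lemma Max_image_uminus:
  fixes f :: "'a \<Rightarrow> real"
  assumes "finite A" "A \<noteq> {}"
  shows "Max ((\<lambda>x. - f x) ` A) = - Min (f ` A)"
proof -
  have "uminus ` f ` A = (\<lambda>x. - f x) ` A" by (rule image_image)
  then show ?thesis using minus_Min_eq_Max[of "f ` A"] assms by simp
qed

lemma Min_image_uminus:
  fixes f :: "'a \<Rightarrow> real"
  assumes "finite A" "A \<noteq> {}"
  shows "Min ((\<lambda>x. - f x) ` A) = - Max (f ` A)"
proof -
  have "uminus ` f ` A = (\<lambda>x. - f x) ` A" by (rule image_image)
  then show ?thesis using minus_Max_eq_Min[of "f ` A"] assms by simp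
qed

lemma disc_plus_uminus:
  assumes "finite V" shows "disc_plus V k (\<lambda>e. - w e) u = disc_minus V k w u"
  unfolding disc_plus_def disc_minus_def ip_permw_uminus dens_uminus
    Max_image_uminus[OF finite_perms[OF assms] perms_nonempty]
  by simp

lemma disc_minus_uminus:
  assumes "finite V" shows "disc_minus V k (\<lambda>e. - w e) u = disc_plus V k w u"
  unfolding disc_plus_def disc_minus_def ip_permw_uminus dens_uminus
    Min_image_uminus[OF finite_perms[OF assms] perms_nonempty]
  by simp

lemma gamma_xy_uminus: "gamma_xy V k x y (\<lambda>e. - w e) u = gamma_xy V k x y w u"
  unfolding gamma_xy_def ip_permw_uminus by (simp add: abs_minus_commute add.commute)

lemma gamma_sq_le_disc_plus:
  fixes w u :: "nat set \<Rightarrow> real"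
  assumes "k \<ge> 1" "n \<ge> k" "n \<ge> 2"
  shows "(real (n div 2) * gamma_xy {1..n} k 1 2 w u / 2)^2
    \<le> 4 * real k * coeff_bound_const k * disc_plus {1..n} k w u
        * (disc_plus {1..n} k w u + disc_minus {1..n} k w u)"
proof -
  define P where "P = perms {1..n}"
  define N where "N = real (card P)"
  define M where "M = Max ((\<lambda>q. ip {1..n} k (permw q w) u) ` P)"
  define C where "C = 4 * real k * coeff_bound_const k"
  define G where "G = gamma_xy {1..n} k 1 2 w u"
  define Dp where "Dp = disc_plus {1..n} k w u"
  define Dm where "Dm = disc_minus {1..n} k w u"
  define X where "X p s = (\<Sum>i\<in>{1..n div 2}. max (swap_gain {1..n} k w u i p s) 0)" for p s
  define gap where "gap p s = M - ip {1..n} k (permw p w) (permw s u)" for p s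
  have "C \<ge> 0" "Dp + Dm \<ge> 0"
    using coeff_bound_const_pos[of k] disc_nonneg[of "{1..n}" k w u] assms(2)
    by (simp_all add: C_def Dp_def Dm_def)
  have pair: "(X p s)^2 \<le> gap p s * (C * (Dp + Dm)) \<and> gap p s \<ge> 0" if "p \<in> P" "s \<in> P" for p s
  proof -
    have p: "p permutes {1..n}" and s: "s permutes {1..n}" using that by (simp_all add: P_def perms_def)
    have "(X p s)^2 \<le> C * gap p s * (Dp + Dm)"
      unfolding X_def gap_def C_def M_def P_def Dp_def Dm_def by (rule sum_swap_gains_sq_le_disc[OF assms(1) p s])
    moreover have "gap p s \<ge> 0"
      unfolding gap_def M_def P_def using ip_permw_permw_bounds(2)[OF _ p s] by simp
    ultimately show ?thesis by (simp add: mult_ac)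
  qed
  have "(\<Sum>(p, s)\<in>P \<times> P. X p s)^2 \<le> (\<Sum>(p, s)\<in>P \<times> P. gap p s) * (\<Sum>(p, s)\<in>P \<times> P. C * (Dp + Dm))"
  proof (rule sum_sq_le_sum_mult_sum)
    fix ps assume "ps \<in> P \<times> P"
    then obtain p s where ps: "ps = (p, s)" "p \<in> P" "s \<in> P" by (metis mem_Times_iff prod.collapse)
    show "(case ps of (p, s) \<Rightarrow> X p s)^2
        \<le> (case ps of (p, s) \<Rightarrow> gap p s) * (case ps of (p, s) \<Rightarrow> C * (Dp + Dm))"
      "(case ps of (p, s) \<Rightarrow> gap p s) \<ge> 0"
      using pair[OF ps(2,3)] by (simp_all add: ps(1))
    show "(case ps of (p, s) \<Rightarrow> C * (Dp + Dm)) \<ge> 0"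
      using \<open>C \<ge> 0\<close> \<open>Dp + Dm \<ge> 0\<close> by (simp add: ps(1))
  next
    show "(\<Sum>(p, s)\<in>P \<times> P. X p s) \<ge> 0"
      unfolding X_def by (intro sum_nonneg) (simp add: split_beta sum_nonneg)
  qed
  moreover have "(\<Sum>(p, s)\<in>P \<times> P. X p s) = N^2 * (real (n div 2) * G / 2)"
    unfolding sum.cartesian_product[symmetric] X_def P_def N_def G_def
    by (rule sum_perms_sum_max_swap_gains)
  moreover have "(\<Sum>(p, s)\<in>P \<times> P. gap p s) = N^2 * Dp"
    unfolding sum.cartesian_product[symmetric] gap_def M_def P_def N_def Dp_def
    using assms(2) by (intro sum_perms_Max_minus_ip_permw) auto
  moreover have "(\<Sum>(p, s)\<in>P \<times> P. C * (Dp + Dm)) = N^2 * (C * (Dp + Dm))"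
    by (simp add: N_def power2_eq_square card_cartesian_product)
  ultimately have "(N^2)^2 * (real (n div 2) * G / 2)^2 \<le> (N^2)^2 * (C * Dp * (Dp + Dm))"
    by (simp only: power_mult_distrib power2_eq_square mult_ac)
  moreover have "(N^2)^2 > 0"
    using card_perms_pos[of "{1..n}"] by (simp add: N_def P_def)
  ultimately have "(real (n div 2) * G / 2)^2 \<le> C * Dp * (Dp + Dm)"
    using mult_le_cancel_left_pos by blast
  then show ?thesis unfolding C_def G_def Dp_def Dm_def .
qed

lemma min_mult_add_le: "0 \<le> a \<Longrightarrow> 0 \<le> b \<Longrightarrow> min a b * (a + b) \<le> 2 * a * b"
  for a b :: real
  by (cases "a \<le> b") (auto simp: min_def algebra_simps intro: mult_left_mono mult_right_mono)

lemma gamma_sq_le_disc_product: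
  fixes w u :: "nat set \<Rightarrow> real"
  assumes "k \<ge> 1" "n \<ge> k" "n \<ge> 2"
  shows "(gamma_xy {1..n} k 1 2 w u * real n)^2
    \<le> 72 * (4 * real k * coeff_bound_const k) * (disc_plus {1..n} k w u * disc_minus {1..n} k w u)"
proof -
  define C where "C = 4 * real k * coeff_bound_const k"
  define Dp where "Dp = disc_plus {1..n} k w u"
  define Dm where "Dm = disc_minus {1..n} k w u"
  define G where "G = gamma_xy {1..n} k 1 2 w u"
  define y where "y = (real (n div 2) * G / 2)^2"
  have "Dp \<ge> 0" "Dm \<ge> 0" "C \<ge> 0"
    using disc_nonneg[of "{1..n}" k w u] assms(2) coeff_bound_const_pos[of k]
    by (simp_all add: Dp_def Dm_def C_def)
  have "y \<le> C * Dp * (Dp + Dm)"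
    using gamma_sq_le_disc_plus[OF assms, of w u] by (simp add: y_def C_def Dp_def Dm_def G_def)
  moreover have "y \<le> C * Dm * (Dm + Dp)"
    using gamma_sq_le_disc_plus[OF assms, of "\<lambda>e. - w e" u]
    by (simp add: y_def C_def Dp_def Dm_def G_def disc_plus_uminus disc_minus_uminus gamma_xy_uminus)
  ultimately have "y \<le> C * (min Dp Dm * (Dp + Dm))"
    by (cases "Dp \<le> Dm") (simp_all add: min_def mult_ac add.commute)
  also have "\<dots> \<le> C * (2 * Dp * Dm)"
    using min_mult_add_le[OF \<open>Dp \<ge> 0\<close> \<open>Dm \<ge> 0\<close>] \<open>C \<ge> 0\<close> by (rule mult_left_mono)
  finally have y_le: "y \<le> 2 * C * (Dp * Dm)" by (simp add: mult_ac)
  have "n \<le> 3 * (n div 2)" using assms(3) by linarith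
  then have "(real n)^2 \<le> (3 * real (n div 2))^2"
    by (intro power_mono) (use of_nat_mono[of n "3 * (n div 2)"] in simp_all)
  then have "(G * real n)^2 \<le> (G * (3 * real (n div 2)))^2"
    unfolding power_mult_distrib by (rule mult_left_mono) simp
  also have "\<dots> = 36 * y" by (simp add: y_def power2_eq_square)
  finally show ?thesis using y_le by (simp add: C_def Dp_def Dm_def G_def)
qed

theorem lemma4p1:
  fixes k :: nat
  assumes "k \<ge> 1"
  shows "\<exists>c::real. c > 0 \<and>
    (\<forall>n::nat. \<forall>w u :: nat set \<Rightarrow> real. n \<ge> k \<longrightarrow>
       disc_plus {1..n} k w u * disc_minus {1..n} k w u
         \<ge> c^2 * (gamma_n n k w u)^2 * (real n)^2)"
proof -
  define C where "C = 72 * (4 * real k * coeff_bound_const k)"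
  have "C > 0" using assms coeff_bound_const_pos[of k] by (simp add: C_def)
  show ?thesis
  proof (intro exI[of _ "sqrt (1 / C)"] conjI allI impI)
    show "sqrt (1 / C) > 0" using \<open>C > 0\<close> by simp
    fix n :: nat and w u :: "nat set \<Rightarrow> real"
    assume "n \<ge> k"
    show "disc_plus {1..n} k w u * disc_minus {1..n} k w u \<ge> (sqrt (1 / C))^2 * (gamma_n n k w u)^2 * (real n)^2"
    proof (cases "n \<ge> 2")
      case True
      then have "(gamma_n n k w u * real n)^2 \<le> C * (disc_plus {1..n} k w u * disc_minus {1..n} k w u)"
        using gamma_sq_le_disc_product[OF assms \<open>n \<ge> k\<close>] by (simp add: gamma_n_def C_def)
      then show ?thesis using \<open>C > 0\<close> by (simp add: power_mult_distrib field_simps)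
    next
      case False
      then show ?thesis
        using disc_nonneg[of "{1..n}" k w u] \<open>n \<ge> k\<close> by (simp add: gamma_n_def)
    qed
  qed
qed

end
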